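(* Given a finite set of types $T$ and a positive integer $n$, it holds that $\mathrm{PoA}(\mathcal{G}_T^n)=\mathrm{GPoA}(\mathcal{G}_T^n)$. Furthermore, there exists an $n$-player game $G\in\mathcal{G}_T^n$ with $|\mathcal{R}|\le 2n$ resources and $\mathrm{PoA}(G)=\mathrm{GPoA}(\mathcal{G}_T^n)$.
   Context: Fix a positive integer $n$ and a finite set of resource types $T=\{(c_1,f_1),\dots,(c_m,f_m)\}$, where $c_t,f_t:\{1,\dots,n\}\to\mathbb{R}$, with the convention $c_t(0)=0$. The class $\mathcal{G}_T^n$ consists of all local resource allocation games $G$ of the following form: agent set $N=\{1,\dots,n\}$; a finite set of resources $\mathcal{R}$; for each $r\in\mathcal{R}$ a value $v_r\ge0$ and a type $(c,f)\in T$, giving $c_r=v_r c$ and $f_r=v_r f$; for each agent $i$ an action set $\mathcal{A}_i\subseteq 2^{\mathcal{R}}$, with $\mathcal{A}=\mathcal{A}_1\times\dots\times\mathcal{A}_n$. For $a\in\mathcal{A}$, $|a|_r$ is the number of agents $i$ with $r\in a_i$; the system cost is $C(a)=\sum_{r\in\mathcal{R}}c_r(|a|_r)$ and the local cost of agent $i$ is $J_i(a)=\sum_{r\in a_i}f_r(|a|_r)$. A Nash equilibrium is $a^{ne}\in\mathcal{A}$ with $J_i(a^{ne})\le J_i(a_i,a^{ne}_{-i})$ for all $a_i\in\mathcal{A}_i$, $i\in N$; $\mathrm{PoA}(G)=\max_{a\in\mathrm{NE}(G)}C(a)/\min_{a\in\mathcal{A}}C(a)$, and $\mathrm{PoA}(\mathcal{G}_T^n)=\sup_{G\in\mathcal{G}_T^n}\mathrm{PoA}(G)$.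 The generalized price-of-anarchy of the class is $\mathrm{GPoA}(\mathcal{G}_T^n)=\inf\{\lambda/(1-\mu):\lambda>0,\mu<1\}$ over those $(\lambda,\mu)$ such that for every $G\in\mathcal{G}_T^n$ and all $a,a'\in\mathcal{A}$: $\sum_{i=1}^nJ_i(a'_i,a_{-i})-\sum_{i=1}^nJ_i(a)+C(a)\le\lambda C(a')+\mu C(a)$. *)

theory Defs
  imports "HOL-Library.Extended_Real" "HOL-Library.FuncSet"
begin

text \<open>A resource type is a pair (c, f) of functions; only the values on 1..n matter,
  and c(0) = 0 is imposed by convention in resource_cost.\<close>
type_synonym rtype = "(nat \<Rightarrow> real) \<times> (nat \<Rightarrow> real)"

record lra_game =
  res  :: "nat set"
  val  :: "nat \<Rightarrow> real"
  rtyp  :: "nat \<Rightarrow> rtype"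
  acts :: "nat \<Rightarrow> nat set set"

definition in_class :: "rtype set \<Rightarrow> nat \<Rightarrow> lra_game \<Rightarrow> bool" where
  "in_class T n G \<longleftrightarrow>
     finite (res G) \<and>
     (\<forall>r\<in>res G. val G r \<ge> 0 \<and> rtyp G r \<in> T) \<and>
     (\<forall>i\<in>{1..n}. acts G i \<noteq> {} \<and> (\<forall>s\<in>acts G i. s \<subseteq> res G))"

definition allocs :: "nat \<Rightarrow> lra_game \<Rightarrow> (nat \<Rightarrow> nat set) set" where
  "allocs n G = (\<Pi>\<^sub>E i\<in>{1..n}. acts G i)"

definition load :: "nat \<Rightarrow> (nat \<Rightarrow> nat set) \<Rightarrow> nat \<Rightarrow> nat" where
  "load n a r = card {i\<in>{1..n}. r \<in> a i}"

definition res_cost :: "lra_game \<Rightarrow> nat \<Rightarrow> nat \<Rightarrow> real" where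
  "res_cost G r k = (if k = 0 then 0 else val G r * fst (rtyp G r) k)"

definition res_util :: "lra_game \<Rightarrow> nat \<Rightarrow> nat \<Rightarrow> real" where
  "res_util G r k = val G r * snd (rtyp G r) k"

definition sys_cost :: "nat \<Rightarrow> lra_game \<Rightarrow> (nat \<Rightarrow> nat set) \<Rightarrow> real" where
  "sys_cost n G a = (\<Sum>r\<in>res G. res_cost G r (load n a r))"

definition local_cost :: "nat \<Rightarrow> lra_game \<Rightarrow> nat \<Rightarrow> (nat \<Rightarrow> nat set) \<Rightarrow> real" where
  "local_cost n G i a = (\<Sum>r\<in>a i. res_util G r (load n a r))"

definition is_NE :: "nat \<Rightarrow> lra_game \<Rightarrow> (nat \<Rightarrow> nat set) \<Rightarrow> bool" where
  "is_NE n G a \<longleftrightarrow> a \<in> allocs n G \<and>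
     (\<forall>i\<in>{1..n}. \<forall>b\<in>acts G i. local_cost n G i a \<le> local_cost n G i (a(i := b)))"

definition cost_ratio :: "real \<Rightarrow> real \<Rightarrow> ereal" where
  "cost_ratio x opt = (if opt = 0 then (if x = 0 then 1 else \<infinity>) else ereal (x / opt))"

definition opt_cost :: "nat \<Rightarrow> lra_game \<Rightarrow> real" where
  "opt_cost n G = Min (sys_cost n G ` allocs n G)"

definition PoA :: "nat \<Rightarrow> lra_game \<Rightarrow> ereal" where
  "PoA n G = (SUP a\<in>{a. is_NE n G a}. cost_ratio (sys_cost n G a) (opt_cost n G))"

definition PoA_class :: "rtype set \<Rightarrow> nat \<Rightarrow> ereal" where
  "PoA_class T n = (SUP G\<in>{G. in_class T n G}. PoA n G)"

definition smooth_pair :: "rtype set \<Rightarrow> nat \<Rightarrow> real \<Rightarrow> real \<Rightarrow> bool" where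
  "smooth_pair T n lam mu \<longleftrightarrow> lam > 0 \<and> mu < 1 \<and>
     (\<forall>G. in_class T n G \<longrightarrow> (\<forall>a\<in>allocs n G. \<forall>a'\<in>allocs n G.
        (\<Sum>i\<in>{1..n}. local_cost n G i (a(i := a' i))) - (\<Sum>i\<in>{1..n}. local_cost n G i a)
          + sys_cost n G a \<le> lam * sys_cost n G a' + mu * sys_cost n G a))"

definition GPoA :: "rtype set \<Rightarrow> nat \<Rightarrow> ereal" where
  "GPoA T n = (INF p\<in>{(lam, mu). smooth_pair T n lam mu}. ereal (fst p / (1 - snd p)))"

end

theory Submission
  imports Defs
begin

text \<open>Given two profiles a and a', each resource is described by a column (t, A, X, B): its type, and
  how many agents use it only in a, in both, and only in a'. The smoothness inequality is a sum of
  per-resource terms val * (col_dev + col_ne), so it holds for every game as soon as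
  col_ne + \<nu> * col_dev \<le> \<rho> * col_opt for all finitely many columns; this yields the smooth pair
  (\<rho>/\<nu>, 1 - 1/\<nu>) with value \<rho>. The least such \<rho> is, by one-dimensional LP duality, the best
  ratio of a nonnegative mixture of at most two columns with nonnegative total deviation, and such
  a mixture is realised by a circulant game on 2n resources whose symmetric "equilibrium" profile
  is a Nash equilibrium. If some utility value f(k) is nonpositive, a single column already gives an
  equilibrium of positive cost against an optimum of cost 0, and both sides are infinite.\<close>

section \<open>Cyclic shifts\<close>

lemma mod_eq_imp_eq_in_interval:
  fixes n s x y :: nat
  assumes "x mod n = y mod n" "x \<in> {s..<s + n}" "y \<in> {s..<s + n}"
  shows "x = y"
proof -
  have "u = v" if "u \<le> v" "u mod n = v mod n" "u \<in> {s..<s + n}" "v \<in> {s..<s + n}" for u v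
  proof -
    have "n dvd v - u" using that(1,2) mod_eq_dvd_iff_nat[of u v n] by simp
    moreover have "v - u < n" using that(3,4) by auto
    ultimately have "\<not> 0 < v - u" using nat_dvd_not_less by blast
    then show "u = v" using that(1) by simp
  qed
  then show ?thesis using assms nat_le_linear[of x y] by metis
qed

lemma bij_betw_add_mod:
  fixes n s c :: nat
  assumes "0 < n"
  shows "bij_betw (\<lambda>x. (x + c) mod n) {s..<s + n} {..<n}"
proof -
  have inj: "inj_on (\<lambda>x. (x + c) mod n) {s..<s + n}"
  proof
    fix x y assume "x \<in> {s..<s + n}" "y \<in> {s..<s + n}" "(x + c) mod n = (y + c) mod n"
    then show "x = y" by (intro mod_eq_imp_eq_in_interval[of x n y s]) (auto simp: nat_mod_eq_iff)
  qed
  have "(\<lambda>x. (x + c) mod n) ` {s..<s + n} = {..<n}"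
    using assms by (intro card_subset_eq) (auto simp: card_image[OF inj])
  with inj show ?thesis by (simp add: bij_betw_def)
qed

lemma sum_add_mod:
  fixes g :: "nat \<Rightarrow> 'a::comm_monoid_add"
  assumes "0 < n"
  shows "(\<Sum>q<n. g ((q + c) mod n)) = (\<Sum>m<n. g m)"
  using sum.reindex_bij_betw[OF bij_betw_add_mod[OF assms, of c 0]] by (simp add: atLeast0LessThan)

lemma card_agents_add_mod:
  fixes n r :: nat
  assumes "0 < n"
  shows "card {i\<in>{1..n}. P ((r + i) mod n)} = card {m\<in>{..<n}. P m}"
proof -
  have bij: "bij_betw (\<lambda>i. (i + r) mod n) {1..n} {..<n}"
    using bij_betw_add_mod[OF assms, of r 1] by (simp add: atLeastLessThanSuc_atLeastAtMost)
  have "card {i\<in>{1..n}. P ((i + r) mod n)} = card {m\<in>{..<n}. P m}"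
    by (rule bij_betw_same_card[OF bij_betw_Collect[OF bij]]) simp
  then show ?thesis by (simp add: add.commute)
qed

lemma sum_blocks:
  fixes h :: "nat \<Rightarrow> nat \<Rightarrow> 'a::comm_monoid_add"
  shows "(\<Sum>r<K * n. h (r div n) (r mod n)) = (\<Sum>k<K. \<Sum>q<n. h k q)"
proof (cases "n = 0")
  case False
  have block: "(\<Sum>r\<in>{k * n..<k * n + n}. h (r div n) (r mod n)) = (\<Sum>q<n. h k q)" for k
    using sum.reindex[of "\<lambda>q. k * n + q" "{..<n}" "\<lambda>r. h (r div n) (r mod n)"] False
    by (simp add: atLeast0LessThan[symmetric] add.commute)
  have "(\<Sum>r<K * n. h (r div n) (r mod n)) = (\<Sum>k<K. \<Sum>r\<in>{k * n..<k * n + n}. h (r div n) (r mod n))"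
    by (rule sum.nat_group[symmetric])
  also have "\<dots> = (\<Sum>k<K. \<Sum>q<n. h k q)"
    by (rule sum.cong[OF refl]) (rule block)
  finally show ?thesis .
qed simp

section \<open>Loads and local costs\<close>

lemma load_le: "load n a r \<le> n"
  unfolding load_def by (rule order_trans[OF card_mono[of "{1..n}"]]) auto

lemma load_fun_upd:
  assumes "i \<in> {1..n}" "r \<in> B"
  shows "load n (a(i := B)) r = load n a r + (if r \<in> a i then 0 else 1)"
proof (cases "r \<in> a i")
  case True
  then have "{j\<in>{1..n}. r \<in> (a(i := B)) j} = {j\<in>{1..n}. r \<in> a j}"
    using assms by auto
  then show ?thesis using True by (simp add: load_def)
next
  case False
  then have "{j\<in>{1..n}. r \<in> (a(i := B)) j} = insert i {j\<in>{1..n}. r \<in> a j}"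
    using assms by auto
  then show ?thesis using False by (simp add: load_def)
qed

lemma local_cost_fun_upd:
  assumes "i \<in> {1..n}"
  shows "local_cost n G i (a(i := B)) = (\<Sum>r\<in>B. res_util G r (load n a r + (if r \<in> a i then 0 else 1)))"
  unfolding local_cost_def using load_fun_upd[OF assms] by simp

lemma sum_indicator_const:
  "finite A \<Longrightarrow> (\<Sum>i\<in>A. if P i then c else 0) = real (card {i\<in>A. P i}) * (c :: real)"
  using sum.inter_filter[of A "\<lambda>_. c" P] by simp

lemma sum_subset_indicator:
  assumes "finite R" "S \<subseteq> R"
  shows "(\<Sum>r\<in>S. g r) = (\<Sum>r\<in>R. if r \<in> S then g r else 0)"
  using sum.inter_restrict[OF assms(1), of g S] assms(2) by (simp add: Int_absorb1)

lemma sum_local_cost: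
  assumes "finite R" "\<forall>i\<in>{1..n}. a i \<subseteq> R"
  shows "(\<Sum>i\<in>{1..n}. local_cost n G i a) = (\<Sum>r\<in>R. real (load n a r) * res_util G r (load n a r))"
proof -
  have "(\<Sum>i\<in>{1..n}. local_cost n G i a)
      = (\<Sum>i\<in>{1..n}. \<Sum>r\<in>R. if r \<in> a i then res_util G r (load n a r) else 0)"
    unfolding local_cost_def by (rule sum.cong[OF refl], rule sum_subset_indicator) (use assms in auto)
  also have "\<dots> = (\<Sum>r\<in>R. real (load n a r) * res_util G r (load n a r))"
    by (subst sum.swap) (simp only: sum_indicator_const finite_atLeastAtMost load_def)
  finally show ?thesis .
qed

lemma sum_local_cost_deviation:
  assumes "finite R" "\<forall>i\<in>{1..n}. a' i \<subseteq> R"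
  shows "(\<Sum>i\<in>{1..n}. local_cost n G i (a(i := a' i))) =
    (\<Sum>r\<in>R. real (card {i\<in>{1..n}. r \<in> a i \<and> r \<in> a' i}) * res_util G r (load n a r)
           + real (card {i\<in>{1..n}. r \<notin> a i \<and> r \<in> a' i}) * res_util G r (load n a r + 1))"
proof -
  have "local_cost n G i (a(i := a' i))
      = (\<Sum>r\<in>R. (if r \<in> a i \<and> r \<in> a' i then res_util G r (load n a r) else 0)
          + (if r \<notin> a i \<and> r \<in> a' i then res_util G r (load n a r + 1) else 0))"
    if i: "i \<in> {1..n}" for i
  proof -
    have "local_cost n G i (a(i := a' i))
        = (\<Sum>r\<in>R. if r \<in> a' i then res_util G r (load n a r + (if r \<in> a i then 0 else 1)) else 0)"
      unfolding local_cost_fun_upd[OF i] by (rule sum_subset_indicator) (use assms i in auto)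
    also have "\<dots> = (\<Sum>r\<in>R. (if r \<in> a i \<and> r \<in> a' i then res_util G r (load n a r) else 0)
          + (if r \<notin> a i \<and> r \<in> a' i then res_util G r (load n a r + 1) else 0))"
      by (rule sum.cong[OF refl]) (simp split: if_split)
    finally show ?thesis .
  qed
  then have "(\<Sum>i\<in>{1..n}. local_cost n G i (a(i := a' i)))
      = (\<Sum>i\<in>{1..n}. \<Sum>r\<in>R. (if r \<in> a i \<and> r \<in> a' i then res_util G r (load n a r) else 0)
          + (if r \<notin> a i \<and> r \<in> a' i then res_util G r (load n a r + 1) else 0))"
    by (rule sum.cong[OF refl])
  also have "\<dots> = (\<Sum>r\<in>R. \<Sum>i\<in>{1..n}. (if r \<in> a i \<and> r \<in> a' i then res_util G r (load n a r) else 0)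
          + (if r \<notin> a i \<and> r \<in> a' i then res_util G r (load n a r + 1) else 0))"
    by (rule sum.swap)
  also have "\<dots> = (\<Sum>r\<in>R. real (card {i\<in>{1..n}. r \<in> a i \<and> r \<in> a' i}) * res_util G r (load n a r)
           + real (card {i\<in>{1..n}. r \<notin> a i \<and> r \<in> a' i}) * res_util G r (load n a r + 1))"
    unfolding sum.distrib by (simp only: sum_indicator_const finite_atLeastAtMost)
  finally show ?thesis .
qed

lemma alloc_subset_res:
  assumes "in_class T n G" "a \<in> allocs n G" "i \<in> {1..n}"
  shows "a i \<subseteq> res G"
proof -
  have "a i \<in> acts G i" using assms(2,3) by (auto simp: allocs_def)
  then show ?thesis using assms(1,3) by (auto simp: in_class_def)
qed

section \<open>Columns and smooth pairs\<close>

type_synonym column = "rtype \<times> nat \<times> nat \<times> nat"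

definition type_cost :: "rtype \<Rightarrow> nat \<Rightarrow> real" where
  "type_cost t k = (if k = 0 then 0 else fst t k)"

lemma res_cost_eq: "res_cost G r k = val G r * type_cost (rtyp G r) k"
  by (simp add: res_cost_def type_cost_def)

lemma type_cost_nonneg:
  assumes "\<forall>t\<in>T. \<forall>k\<in>{1..n}. 0 < fst t k" "t \<in> T" "k \<le> n"
  shows "0 \<le> type_cost t k"
  using assms by (cases "k = 0") (auto simp: type_cost_def less_imp_le)

lemma type_cost_pos:
  assumes "\<forall>t\<in>T. \<forall>k\<in>{1..n}. 0 < fst t k" "t \<in> T" "1 \<le> k" "k \<le> n"
  shows "0 < type_cost t k"
  using assms by (simp add: type_cost_def)

definition columns :: "rtype set \<Rightarrow> nat \<Rightarrow> column set" where
  "columns T n = {(t, A, X, B). t \<in> T \<and> A + X + B \<le> n}"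

definition col_ne :: "column \<Rightarrow> real" where
  "col_ne = (\<lambda>(t, A, X, B). type_cost t (A + X))"

definition col_opt :: "column \<Rightarrow> real" where
  "col_opt = (\<lambda>(t, A, X, B). type_cost t (X + B))"

definition col_dev :: "column \<Rightarrow> real" where
  "col_dev = (\<lambda>(t, A, X, B). real B * snd t (A + X + 1) - real A * snd t (A + X))"

lemma finite_columns: "finite T \<Longrightarrow> finite (columns T n)"
  by (rule finite_subset[of _ "T \<times> {..n} \<times> {..n} \<times> {..n}"]) (auto simp: columns_def)

lemma col_opt_nonneg:
  assumes "\<forall>t\<in>T. \<forall>k\<in>{1..n}. 0 < fst t k" "j \<in> columns T n"
  shows "0 \<le> col_opt j"
  using assms type_cost_nonneg[OF assms(1)] by (auto simp: columns_def col_opt_def)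

definition res_column :: "nat \<Rightarrow> lra_game \<Rightarrow> (nat \<Rightarrow> nat set) \<Rightarrow> (nat \<Rightarrow> nat set) \<Rightarrow> nat \<Rightarrow> column" where
  "res_column n G a a' r = (rtyp G r,
     card {i\<in>{1..n}. r \<in> a i \<and> r \<notin> a' i},
     card {i\<in>{1..n}. r \<in> a i \<and> r \<in> a' i},
     card {i\<in>{1..n}. r \<notin> a i \<and> r \<in> a' i})"

lemma card_filter_split:
  assumes "finite A"
  shows "card {i\<in>A. P i} = card {i\<in>A. P i \<and> \<not> Q i} + card {i\<in>A. P i \<and> Q i}"
proof -
  have "{i\<in>A. P i} = {i\<in>A. P i \<and> \<not> Q i} \<union> {i\<in>A. P i \<and> Q i}" by auto
  then show ?thesis using assms by (simp add: card_Un_disjoint disjoint_iff)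
qed

lemma load_split_fst:
  "load n a r = card {i\<in>{1..n}. r \<in> a i \<and> r \<notin> a' i} + card {i\<in>{1..n}. r \<in> a i \<and> r \<in> a' i}"
  unfolding load_def by (rule card_filter_split) simp

lemma load_split_snd:
  "load n a' r = card {i\<in>{1..n}. r \<in> a i \<and> r \<in> a' i} + card {i\<in>{1..n}. r \<notin> a i \<and> r \<in> a' i}"
proof -
  have "load n a' r = card {i\<in>{1..n}. r \<in> a' i \<and> r \<notin> a i} + card {i\<in>{1..n}. r \<in> a' i \<and> r \<in> a i}"
    unfolding load_def by (rule card_filter_split) simp
  then show ?thesis by (simp add: conj_commute add.commute)
qed

lemma res_column_in_columns:
  assumes "in_class T n G" "r \<in> res G"
  shows "res_column n G a a' r \<in> columns T n"
proof -
  let ?A = "{i\<in>{1..n}. r \<in> a i \<and> r \<notin> a' i}" and ?X = "{i\<in>{1..n}. r \<in> a i \<and> r \<in> a' i}"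
    and ?B = "{i\<in>{1..n}. r \<notin> a i \<and> r \<in> a' i}"
  have "card ?A + card ?X + card ?B = card (?A \<union> ?X \<union> ?B)"
    by (simp add: card_Un_disjoint disjoint_iff)
  also have "\<dots> \<le> card {1..n}" by (rule card_mono) auto
  finally show ?thesis using assms by (simp add: res_column_def columns_def in_class_def)
qed

lemma res_cost_fst_eq: "res_cost G r (load n a r) = val G r * col_ne (res_column n G a a' r)"
  by (simp add: res_cost_eq res_column_def col_ne_def load_split_fst[of n a r a'])

lemma res_cost_snd_eq: "res_cost G r (load n a' r) = val G r * col_opt (res_column n G a a' r)"
  by (simp add: res_cost_eq res_column_def col_opt_def load_split_snd[of n a' r a])

lemma smoothness_lhs_eq:
  assumes "in_class T n G" "a \<in> allocs n G" "a' \<in> allocs n G"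
  shows "(\<Sum>i\<in>{1..n}. local_cost n G i (a(i := a' i))) - (\<Sum>i\<in>{1..n}. local_cost n G i a) + sys_cost n G a
    = (\<Sum>r\<in>res G. val G r * (col_dev (res_column n G a a' r) + col_ne (res_column n G a a' r)))"
proof -
  have fin: "finite (res G)" using assms(1) by (simp add: in_class_def)
  have sub: "\<forall>i\<in>{1..n}. a i \<subseteq> res G" "\<forall>i\<in>{1..n}. a' i \<subseteq> res G"
    using alloc_subset_res[OF assms(1)] assms(2,3) by blast+
  have "(\<Sum>i\<in>{1..n}. local_cost n G i (a(i := a' i))) - (\<Sum>i\<in>{1..n}. local_cost n G i a) + sys_cost n G a
    = (\<Sum>r\<in>res G. real (card {i\<in>{1..n}. r \<in> a i \<and> r \<in> a' i}) * res_util G r (load n a r)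
           + real (card {i\<in>{1..n}. r \<notin> a i \<and> r \<in> a' i}) * res_util G r (load n a r + 1)
           - real (load n a r) * res_util G r (load n a r) + res_cost G r (load n a r))"
    unfolding sum_local_cost_deviation[OF fin sub(2)] sum_local_cost[OF fin sub(1)] sys_cost_def
    by (simp add: sum_subtractf sum.distrib)
  also have "\<dots> = (\<Sum>r\<in>res G. val G r * (col_dev (res_column n G a a' r) + col_ne (res_column n G a a' r)))"
    unfolding res_cost_fst_eq[of G _ n a a']
    by (rule sum.cong[OF refl])
      (simp add: res_column_def col_dev_def col_ne_def res_util_def load_split_fst[of n a _ a'] algebra_simps)
  finally show ?thesis .
qed

lemma smooth_pair_of_columns:
  assumes "0 < \<nu>" "0 < \<rho>"
    and col_ineq: "\<forall>j\<in>columns T n. col_ne j + \<nu> * col_dev j \<le> \<rho> * col_opt j"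
  shows "smooth_pair T n (\<rho> / \<nu>) (1 - 1 / \<nu>)"
  unfolding smooth_pair_def
proof (intro conjI allI impI ballI)
  fix G a a' assume G: "in_class T n G" and a: "a \<in> allocs n G" and a': "a' \<in> allocs n G"
  let ?j = "res_column n G a a'"
  have "val G r * (col_dev (?j r) + col_ne (?j r))
      \<le> \<rho> / \<nu> * (val G r * col_opt (?j r)) + (1 - 1 / \<nu>) * (val G r * col_ne (?j r))"
    if r: "r \<in> res G" for r
  proof -
    have "col_ne (?j r) + \<nu> * col_dev (?j r) \<le> \<rho> * col_opt (?j r)"
      using col_ineq res_column_in_columns[OF G r] by blast
    then have "col_dev (?j r) + col_ne (?j r) \<le> \<rho> / \<nu> * col_opt (?j r) + (1 - 1 / \<nu>) * col_ne (?j r)"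
      using assms(1) by (simp add: field_simps)
    moreover have "0 \<le> val G r" using G r by (simp add: in_class_def)
    ultimately show ?thesis by (metis mult_left_mono distrib_left mult.left_commute)
  qed
  then have "(\<Sum>r\<in>res G. val G r * (col_dev (?j r) + col_ne (?j r)))
      \<le> \<rho> / \<nu> * (\<Sum>r\<in>res G. val G r * col_opt (?j r)) + (1 - 1 / \<nu>) * (\<Sum>r\<in>res G. val G r * col_ne (?j r))"
    by (simp add: sum_distrib_left flip: sum.distrib) (rule sum_mono)
  then show "(\<Sum>i\<in>{1..n}. local_cost n G i (a(i := a' i))) - (\<Sum>i\<in>{1..n}. local_cost n G i a) + sys_cost n G a
      \<le> \<rho> / \<nu> * sys_cost n G a' + (1 - 1 / \<nu>) * sys_cost n G a"
    unfolding smoothness_lhs_eq[OF G a a']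
    unfolding sys_cost_def res_cost_fst_eq[of G _ n a a'] res_cost_snd_eq[of G _ n a' a] .
qed (use assms in auto)

lemma GPoA_le_of_columns:
  assumes "0 < \<nu>" "0 < \<rho>" "\<forall>j\<in>columns T n. col_ne j + \<nu> * col_dev j \<le> \<rho> * col_opt j"
  shows "GPoA T n \<le> ereal \<rho>"
proof -
  have "GPoA T n \<le> ereal (fst (\<rho> / \<nu>, 1 - 1 / \<nu>) / (1 - snd (\<rho> / \<nu>, 1 - 1 / \<nu>)))"
    unfolding GPoA_def by (rule INF_lower) (simp add: smooth_pair_of_columns[OF assms])
  then show ?thesis using assms(1) by simp
qed

section \<open>The circulant game\<close>

lemma sum_interval_split:
  fixes F0 F1 :: real
  shows "(\<Sum>m\<in>{a..<a + x + b}. if m < a + x then F0 else F1) = real x * F0 + real b * F1"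
proof -
  have "(\<Sum>m\<in>{a..<a + x + b}. if m < a + x then F0 else F1)
      = (\<Sum>m\<in>{a..<a + x}. if m < a + x then F0 else F1) + (\<Sum>m\<in>{a + x..<a + x + b}. if m < a + x then F0 else F1)"
    by (rule sum.atLeastLessThan_concat[symmetric]) auto
  also have "\<dots> = (\<Sum>m\<in>{a..<a + x}. F0) + (\<Sum>m\<in>{a + x..<a + x + b}. F1)"
    by (intro arg_cong2[where f = "(+)"] sum.cong) auto
  finally show ?thesis by simp
qed

text \<open>Agent i orders the n resources of each block cyclically by r \<mapsto> (r + i) mod n, and its two
  actions take the positions [0, A + X) and [A, A + X + B) of every block; by rotation symmetry each
  resource of block k is then used by A k + X k, respectively X k + B k, agents.\<close>

locale circulant_game =
  fixes n K :: nat and t :: "nat \<Rightarrow> rtype" and \<theta> :: "nat \<Rightarrow> real" and A X B :: "nat \<Rightarrow> nat"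
  assumes n_pos: "0 < n" and block_size: "\<And>k. k < K \<Longrightarrow> A k + X k + B k \<le> n"
begin

definition window :: "nat \<Rightarrow> (nat \<Rightarrow> nat) \<Rightarrow> (nat \<Rightarrow> nat) \<Rightarrow> nat set" where
  "window i lo hi = {r\<in>{..<K * n}. (r + i) mod n \<in> {lo (r div n)..<hi (r div n)}}"

definition window_prof :: "(nat \<Rightarrow> nat) \<Rightarrow> (nat \<Rightarrow> nat) \<Rightarrow> nat \<Rightarrow> nat set" where
  "window_prof lo hi = (\<lambda>i\<in>{1..n}. window i lo hi)"

abbreviation ne_act :: "nat \<Rightarrow> nat set" where
  "ne_act i \<equiv> window i (\<lambda>_. 0) (\<lambda>k. A k + X k)"

abbreviation opt_act :: "nat \<Rightarrow> nat set" where
  "opt_act i \<equiv> window i A (\<lambda>k. A k + X k + B k)"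

abbreviation ne_prof :: "nat \<Rightarrow> nat set" where
  "ne_prof \<equiv> window_prof (\<lambda>_. 0) (\<lambda>k. A k + X k)"

abbreviation opt_prof :: "nat \<Rightarrow> nat set" where
  "opt_prof \<equiv> window_prof A (\<lambda>k. A k + X k + B k)"

abbreviation col :: "nat \<Rightarrow> column" where
  "col k \<equiv> (t k, A k, X k, B k)"

definition game :: lra_game where
  "game = \<lparr>res = {..<K * n}, val = \<lambda>r. \<theta> (r div n), rtyp = \<lambda>r. t (r div n),
     acts = \<lambda>i. {ne_act i, opt_act i}\<rparr>"

lemma window_prof_apply: "i \<in> {1..n} \<Longrightarrow> window_prof lo hi i = window i lo hi"
  by (simp add: window_prof_def)

lemma block_lt: "r < K * n \<Longrightarrow> r div n < K"
  using n_pos by (simp add: div_less_iff_less_mult)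

lemma load_window_prof:
  assumes "r < K * n" "hi (r div n) \<le> n"
  shows "load n (window_prof lo hi) r = hi (r div n) - lo (r div n)"
proof -
  have "load n (window_prof lo hi) r = card {i\<in>{1..n}. (r + i) mod n \<in> {lo (r div n)..<hi (r div n)}}"
    unfolding load_def window_prof_def window_def using assms(1) by (intro arg_cong[where f = card]) auto
  also have "\<dots> = card {m\<in>{..<n}. m \<in> {lo (r div n)..<hi (r div n)}}"
    by (rule card_agents_add_mod[OF n_pos])
  also have "{m\<in>{..<n}. m \<in> {lo (r div n)..<hi (r div n)}} = {lo (r div n)..<hi (r div n)}"
    using assms(2) by auto
  finally show ?thesis by simp
qed

lemma sum_window:
  assumes "\<And>k. k < K \<Longrightarrow> hi k \<le> n"
  shows "(\<Sum>r\<in>window i lo hi. g (r div n) ((r + i) mod n)) = (\<Sum>k<K. \<Sum>m\<in>{lo k..<hi k}. g k m)"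
proof -
  let ?h = "\<lambda>k m. if m \<in> {lo k..<hi k} then g k m else 0"
  have "(\<Sum>r\<in>window i lo hi. g (r div n) ((r + i) mod n)) = (\<Sum>r<K * n. ?h (r div n) ((r + i) mod n))"
    unfolding window_def by (rule sum.inter_filter) simp
  also have "\<dots> = (\<Sum>r<K * n. ?h (r div n) ((r mod n + i) mod n))"
    by (simp only: mod_add_left_eq)
  also have "\<dots> = (\<Sum>k<K. \<Sum>q<n. ?h k ((q + i) mod n))"
    by (rule sum_blocks)
  also have "\<dots> = (\<Sum>k<K. \<Sum>m<n. ?h k m)"
  proof (rule sum.cong[OF refl])
    fix k show "(\<Sum>q<n. ?h k ((q + i) mod n)) = (\<Sum>m<n. ?h k m)"
      by (rule sum_add_mod[OF n_pos, where g = "?h k"])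
  qed
  also have "\<dots> = (\<Sum>k<K. \<Sum>m\<in>{lo k..<hi k}. g k m)"
  proof (rule sum.cong[OF refl])
    fix k assume "k \<in> {..<K}"
    then have "hi k \<le> n" using assms by simp
    then have "{m\<in>{..<n}. m \<in> {lo k..<hi k}} = {lo k..<hi k}" by auto
    then show "(\<Sum>m<n. ?h k m) = (\<Sum>m\<in>{lo k..<hi k}. g k m)" by (simp add: sum.inter_filter[symmetric])
  qed
  finally show ?thesis .
qed

lemma sys_cost_window_prof:
  assumes "\<And>k. k < K \<Longrightarrow> hi k \<le> n"
  shows "sys_cost n game (window_prof lo hi) = real n * (\<Sum>k<K. \<theta> k * type_cost (t k) (hi k - lo k))"
proof -
  have "sys_cost n game (window_prof lo hi) = (\<Sum>r<K * n. \<theta> (r div n) * type_cost (t (r div n)) (hi (r div n) - lo (r div n)))"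
    unfolding sys_cost_def res_cost_eq
    by (intro sum.cong) (auto simp: game_def load_window_prof assms block_lt)
  also have "\<dots> = (\<Sum>k<K. \<Sum>q<n. \<theta> k * type_cost (t k) (hi k - lo k))"
    by (rule sum_blocks)
  finally show ?thesis by (simp add: sum_distrib_left)
qed

lemma ne_size: "k < K \<Longrightarrow> A k + X k \<le> n"
  using block_size by fastforce

lemma sys_cost_ne_prof: "sys_cost n game ne_prof = real n * (\<Sum>k<K. \<theta> k * col_ne (col k))"
  by (simp add: sys_cost_window_prof ne_size col_ne_def)

lemma sys_cost_opt_prof: "sys_cost n game opt_prof = real n * (\<Sum>k<K. \<theta> k * col_opt (col k))"
  by (simp add: sys_cost_window_prof block_size col_opt_def)

lemma game_in_class:
  assumes "\<And>k. k < K \<Longrightarrow> t k \<in> T \<and> 0 \<le> \<theta> k"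
  shows "in_class T n game"
  using assms block_lt by (auto simp: in_class_def game_def window_def)

lemma card_res_game: "card (res game) = K * n"
  by (simp add: game_def)

lemma ne_prof_in_allocs: "ne_prof \<in> allocs n game"
  and opt_prof_in_allocs: "opt_prof \<in> allocs n game"
  by (auto simp: allocs_def window_prof_def game_def)

lemma local_cost_ne_prof:
  assumes i: "i \<in> {1..n}"
  shows "local_cost n game i ne_prof = (\<Sum>k<K. real (A k + X k) * (\<theta> k * snd (t k) (A k + X k)))"
proof -
  have "local_cost n game i ne_prof = (\<Sum>r\<in>ne_act i. (\<lambda>k m. \<theta> k * snd (t k) (A k + X k)) (r div n) ((r + i) mod n))"
  proof -
    have "res_util game r (load n ne_prof r) = \<theta> (r div n) * snd (t (r div n)) (A (r div n) + X (r div n))"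
      if "r \<in> ne_act i" for r
      using that by (simp add: res_util_def game_def load_window_prof window_def block_lt ne_size)
    then show ?thesis unfolding local_cost_def using i by (simp add: window_prof_apply)
  qed
  also have "\<dots> = (\<Sum>k<K. real (A k + X k) * (\<theta> k * snd (t k) (A k + X k)))"
    using sum_window[where g = "\<lambda>k m. \<theta> k * snd (t k) (A k + X k)" and lo = "\<lambda>_. 0" and hi = "\<lambda>k. A k + X k"]
    by (simp add: ne_size)
  finally show ?thesis .
qed

lemma local_cost_deviation:
  assumes i: "i \<in> {1..n}"
  shows "local_cost n game i (ne_prof(i := opt_act i))
    = (\<Sum>k<K. real (X k) * (\<theta> k * snd (t k) (A k + X k)) + real (B k) * (\<theta> k * snd (t k) (A k + X k + 1)))"
proof -
  let ?g = "\<lambda>k m. if m < A k + X k then \<theta> k * snd (t k) (A k + X k) else \<theta> k * snd (t k) (A k + X k + 1)"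
  have "local_cost n game i (ne_prof(i := opt_act i)) = (\<Sum>r\<in>opt_act i. ?g (r div n) ((r + i) mod n))"
  proof -
    have "res_util game r (load n ne_prof r + (if r \<in> ne_prof i then 0 else 1)) = ?g (r div n) ((r + i) mod n)"
      if "r \<in> opt_act i" for r
      using that i by (simp add: res_util_def game_def load_window_prof window_def window_prof_apply block_lt ne_size)
    then show ?thesis unfolding local_cost_fun_upd[OF i] by simp
  qed
  also have "\<dots> = (\<Sum>k<K. \<Sum>m\<in>{A k..<A k + X k + B k}. ?g k m)"
    using block_size by (rule sum_window)
  also have "\<dots> = (\<Sum>k<K. real (X k) * (\<theta> k * snd (t k) (A k + X k)) + real (B k) * (\<theta> k * snd (t k) (A k + X k + 1)))"
    by (simp only: sum_interval_split)
  finally show ?thesis .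
qed

lemma is_NE_ne_prof:
  assumes "0 \<le> (\<Sum>k<K. \<theta> k * col_dev (col k))"
  shows "is_NE n game ne_prof"
  unfolding is_NE_def
proof (intro conjI ballI ne_prof_in_allocs)
  fix i b assume i: "i \<in> {1..n}" and b: "b \<in> acts game i"
  have "local_cost n game i (ne_prof(i := opt_act i)) - local_cost n game i ne_prof
      = (\<Sum>k<K. \<theta> k * col_dev (col k))"
    unfolding local_cost_ne_prof[OF i] local_cost_deviation[OF i] sum_subtractf[symmetric]
    by (intro sum.cong) (simp_all add: col_dev_def algebra_simps)
  then have "local_cost n game i ne_prof \<le> local_cost n game i (ne_prof(i := opt_act i))"
    using assms by linarith
  moreover have "ne_prof(i := ne_act i) = ne_prof"
    using i by (simp add: window_prof_def fun_upd_idem)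
  ultimately show "local_cost n game i ne_prof \<le> local_cost n game i (ne_prof(i := b))"
    using b by (auto simp: game_def)
qed

end

section \<open>Price of anarchy versus smooth pairs\<close>

lemma sys_cost_nonneg:
  assumes "\<forall>t\<in>T. \<forall>k\<in>{1..n}. 0 < fst t k" "in_class T n G"
  shows "0 \<le> sys_cost n G a"
  unfolding sys_cost_def res_cost_eq
proof (rule sum_nonneg)
  fix r assume "r \<in> res G"
  then have "0 \<le> val G r" "rtyp G r \<in> T" using assms(2) by (auto simp: in_class_def)
  then show "0 \<le> val G r * type_cost (rtyp G r) (load n a r)"
    using type_cost_nonneg[OF assms(1) _ load_le] by simp
qed

lemma allocs_finite_nonempty:
  assumes "in_class T n G"
  shows "finite (allocs n G)" "allocs n G \<noteq> {}"
proof -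
  have "acts G i \<subseteq> Pow (res G)" if "i \<in> {1..n}" for i
    using assms that unfolding in_class_def by blast
  then have "finite (acts G i)" if "i \<in> {1..n}" for i
    using assms that by (meson finite_Pow_iff finite_subset in_class_def)
  then show "finite (allocs n G)" unfolding allocs_def by (intro finite_PiE) auto
  show "allocs n G \<noteq> {}" using assms by (simp add: allocs_def in_class_def PiE_eq_empty_iff)
qed

lemma opt_cost_attained:
  assumes "in_class T n G"
  obtains a' where "a' \<in> allocs n G" "sys_cost n G a' = opt_cost n G"
proof -
  have "opt_cost n G \<in> sys_cost n G ` allocs n G"
    unfolding opt_cost_def using allocs_finite_nonempty[OF assms] by (intro Min_in) auto
  then show ?thesis using that by auto
qed

lemma opt_cost_le:
  assumes "in_class T n G" "a \<in> allocs n G"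
  shows "opt_cost n G \<le> sys_cost n G a"
  unfolding opt_cost_def using allocs_finite_nonempty[OF assms(1)] assms(2) by (intro Min_le) auto

lemma opt_cost_nonneg:
  assumes "\<forall>t\<in>T. \<forall>k\<in>{1..n}. 0 < fst t k" "in_class T n G"
  shows "0 \<le> opt_cost n G"
  using opt_cost_attained[OF assms(2)] sys_cost_nonneg[OF assms] by metis

lemma cost_ratio_le:
  assumes "0 \<le> C" "0 \<le> opt" "1 \<le> \<rho>" "C \<le> \<rho> * opt"
  shows "cost_ratio C opt \<le> ereal \<rho>"
  using assms by (cases "opt = 0") (auto simp: cost_ratio_def divide_le_eq)

lemma cost_ratio_antimono:
  assumes "0 \<le> C" "0 \<le> opt" "opt \<le> opt'"
  shows "cost_ratio C opt' \<le> cost_ratio C opt"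
proof (cases "opt = 0")
  case False
  then show ?thesis using assms by (auto simp: cost_ratio_def divide_left_mono)
qed (use assms in \<open>auto simp: cost_ratio_def\<close>)

lemma cost_ratio_scale: "0 < c \<Longrightarrow> cost_ratio (c * x) (c * y) = cost_ratio x y"
  by (simp add: cost_ratio_def)

lemma PoA_ge_of_columns:
  assumes cost_pos: "\<forall>t\<in>T. \<forall>k\<in>{1..n}. 0 < fst t k" and "0 < n"
    and cols: "\<And>k. k < K \<Longrightarrow> js k \<in> columns T n \<and> 0 \<le> \<theta> k"
    and dev: "0 \<le> (\<Sum>k<K. \<theta> k * col_dev (js k))"
  obtains G where "in_class T n G" "card (res G) = K * n"
    "cost_ratio (\<Sum>k<K. \<theta> k * col_ne (js k)) (\<Sum>k<K. \<theta> k * col_opt (js k)) \<le> PoA n G"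
proof -
  define t where "t k = fst (js k)" for k
  define A where "A k = fst (snd (js k))" for k
  define X where "X k = fst (snd (snd (js k)))" for k
  define B where "B k = snd (snd (snd (js k)))" for k
  have js: "js k = (t k, A k, X k, B k)" for k by (simp add: t_def A_def X_def B_def)
  interpret circulant_game n K t \<theta> A X B
    using \<open>0 < n\<close> cols by unfold_locales (auto simp: columns_def js)
  have G: "in_class T n game" using cols by (intro game_in_class) (auto simp: columns_def js)
  have NE: "is_NE n game ne_prof" using dev by (intro is_NE_ne_prof) (simp add: js)
  have "cost_ratio (sys_cost n game ne_prof) (sys_cost n game opt_prof)
      \<le> cost_ratio (sys_cost n game ne_prof) (opt_cost n game)"
    by (intro cost_ratio_antimono sys_cost_nonneg[OF cost_pos G] opt_cost_nonneg[OF cost_pos G]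
        opt_cost_le[OF G opt_prof_in_allocs])
  also have "\<dots> \<le> PoA n game"
    unfolding PoA_def using NE by (intro SUP_upper) simp
  finally have "cost_ratio (\<Sum>k<K. \<theta> k * col_ne (js k)) (\<Sum>k<K. \<theta> k * col_opt (js k)) \<le> PoA n game"
    using \<open>0 < n\<close> by (simp add: sys_cost_ne_prof sys_cost_opt_prof cost_ratio_scale js)
  then show ?thesis using that G card_res_game by blast
qed

lemma PoA_ge_two_columns:
  assumes cost_pos: "\<forall>t\<in>T. \<forall>k\<in>{1..n}. 0 < fst t k" and "0 < n"
    and "j \<in> columns T n" "k \<in> columns T n" "0 \<le> \<theta>1" "0 \<le> \<theta>2"
    and "0 \<le> \<theta>1 * col_dev j + \<theta>2 * col_dev k" "0 < \<theta>1 * col_opt j + \<theta>2 * col_opt k"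
  obtains G where "in_class T n G" "card (res G) = 2 * n"
    "ereal ((\<theta>1 * col_ne j + \<theta>2 * col_ne k) / (\<theta>1 * col_opt j + \<theta>2 * col_opt k)) \<le> PoA n G"
proof -
  define js where "js b = (if b = 0 then j else k)" for b :: nat
  define \<theta> where "\<theta> b = (if b = 0 then \<theta>1 else \<theta>2)" for b :: nat
  have sums: "(\<Sum>b<2. \<theta> b * f (js b)) = \<theta>1 * f j + \<theta>2 * f k" for f :: "column \<Rightarrow> real"
    by (simp add: js_def \<theta>_def numeral_2_eq_2)
  have cols: "js b \<in> columns T n \<and> 0 \<le> \<theta> b" if "b < 2" for b
    using assms(3-6) by (simp add: js_def \<theta>_def)
  have dev: "0 \<le> (\<Sum>b<2. \<theta> b * col_dev (js b))" unfolding sums[of col_dev] by (rule assms(7))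
  obtain G where G: "in_class T n G" "card (res G) = 2 * n"
    and "cost_ratio (\<Sum>b<2. \<theta> b * col_ne (js b)) (\<Sum>b<2. \<theta> b * col_opt (js b)) \<le> PoA n G"
    by (rule PoA_ge_of_columns[OF cost_pos assms(2) cols dev])
  then show ?thesis unfolding sums[of col_ne] sums[of col_opt] using that assms(8) by (simp add: cost_ratio_def)
qed

lemma smooth_pair_sum_ge_one:
  assumes cost_pos: "\<forall>t\<in>T. \<forall>k\<in>{1..n}. 0 < fst t k" and "t0 \<in> T" "0 < n"
    and smooth: "smooth_pair T n lam mu"
  shows "1 \<le> lam + mu"
proof -
  interpret circulant_game n 1 "\<lambda>_. t0" "\<lambda>_. 1" "\<lambda>_. 0" "\<lambda>_. 1" "\<lambda>_. 0"
    using \<open>0 < n\<close> by unfold_locales auto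
  have G: "in_class T n game" using \<open>t0 \<in> T\<close> by (intro game_in_class) simp
  have pos: "0 < sys_cost n game opt_prof"
    unfolding sys_cost_opt_prof using type_cost_pos[OF cost_pos \<open>t0 \<in> T\<close>, of 1] \<open>0 < n\<close>
    by (simp add: col_opt_def)
  have "sys_cost n game opt_prof \<le> lam * sys_cost n game opt_prof + mu * sys_cost n game opt_prof"
    using smooth G opt_prof_in_allocs unfolding smooth_pair_def by fastforce
  then show ?thesis using pos by (simp add: algebra_simps flip: distrib_right)
qed

lemma PoA_le_smooth:
  assumes cost_pos: "\<forall>t\<in>T. \<forall>k\<in>{1..n}. 0 < fst t k" and "T \<noteq> {}" "0 < n"
    and smooth: "smooth_pair T n lam mu" and G: "in_class T n G"
  shows "PoA n G \<le> ereal (lam / (1 - mu))"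
  unfolding PoA_def
proof (rule SUP_least)
  fix a assume "a \<in> {a. is_NE n G a}"
  then have NE: "is_NE n G a" and a: "a \<in> allocs n G" by (simp_all add: is_NE_def)
  obtain a' where a': "a' \<in> allocs n G" "sys_cost n G a' = opt_cost n G"
    using opt_cost_attained[OF G] by blast
  have lm: "0 < lam" "mu < 1" using smooth by (auto simp: smooth_pair_def)
  have "1 \<le> lam + mu" using assms(2) smooth_pair_sum_ge_one[OF cost_pos _ \<open>0 < n\<close> smooth] by blast
  \<comment> \<open>Needed because an equilibrium of cost 0 has ratio 1 when the optimum is 0.\<close>
  then have ge1: "1 \<le> lam / (1 - mu)" using lm by (simp add: field_simps)
  have "local_cost n G i a \<le> local_cost n G i (a(i := a' i))" if "i \<in> {1..n}" for i
    using NE PiE_mem[OF a'(1)[unfolded allocs_def] that] that by (simp add: is_NE_def)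
  then have "(\<Sum>i\<in>{1..n}. local_cost n G i a) \<le> (\<Sum>i\<in>{1..n}. local_cost n G i (a(i := a' i)))"
    by (rule sum_mono)
  moreover have "(\<Sum>i\<in>{1..n}. local_cost n G i (a(i := a' i))) - (\<Sum>i\<in>{1..n}. local_cost n G i a)
      + sys_cost n G a \<le> lam * sys_cost n G a' + mu * sys_cost n G a"
    using smooth G a a'(1) unfolding smooth_pair_def by blast
  ultimately have "(1 - mu) * sys_cost n G a \<le> lam * opt_cost n G" using a'(2) by (simp add: algebra_simps)
  then have "sys_cost n G a \<le> lam / (1 - mu) * opt_cost n G" using lm by (simp add: field_simps)
  then show "cost_ratio (sys_cost n G a) (opt_cost n G) \<le> ereal (lam / (1 - mu))"
    using cost_ratio_le sys_cost_nonneg[OF cost_pos G] opt_cost_nonneg[OF cost_pos G] ge1 by blast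
qed

lemma PoA_class_le_GPoA:
  assumes "\<forall>t\<in>T. \<forall>k\<in>{1..n}. 0 < fst t k" "T \<noteq> {}" "0 < n"
  shows "PoA_class T n \<le> GPoA T n"
  unfolding PoA_class_def GPoA_def
  using PoA_le_smooth[OF assms] by (intro SUP_least INF_greatest) auto

section \<open>A one-dimensional LP duality\<close>

text \<open>The candidates below are the vertices of the dual program: maximise the ratio of the weighted
  ne-values to the weighted opt-values over nonnegative weights with nonnegative weighted deviation.
  They are single columns with nonnegative deviation, and pairs of columns with deviations of
  opposite signs, weighted so that the deviations cancel.\<close>

lemma dual_candidate_max:
  fixes ne opt dev :: "'a \<Rightarrow> real"
  assumes "finite J" "j0 \<in> J" "0 \<le> dev j0" "0 < opt j0"
    and opt_nonneg: "\<And>j. j \<in> J \<Longrightarrow> 0 \<le> opt j"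
    and dev_pos_opt_pos: "\<And>j. j \<in> J \<Longrightarrow> 0 < dev j \<Longrightarrow> 0 < opt j"
  obtains V j k \<theta>1 \<theta>2 where
    "\<forall>j\<in>J. 0 \<le> dev j \<longrightarrow> 0 < opt j \<longrightarrow> ne j \<le> V * opt j"
    "\<forall>j\<in>J. \<forall>k\<in>J. 0 < dev j \<longrightarrow> dev k < 0 \<longrightarrow>
       - dev k * ne j + dev j * ne k \<le> V * (- dev k * opt j + dev j * opt k)"
    "j \<in> J" "k \<in> J" "0 \<le> \<theta>1" "0 \<le> \<theta>2" "0 \<le> \<theta>1 * dev j + \<theta>2 * dev k" "0 < \<theta>1 * opt j + \<theta>2 * opt k"
    "V = (\<theta>1 * ne j + \<theta>2 * ne k) / (\<theta>1 * opt j + \<theta>2 * opt k)"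
proof -
  define ratio where "ratio = (\<lambda>(\<theta>1, j, \<theta>2, k). (\<theta>1 * ne j + \<theta>2 * ne k) / (\<theta>1 * opt j + \<theta>2 * opt k))"
  define feasible where "feasible = (\<lambda>(\<theta>1, j, \<theta>2, k). j \<in> J \<and> k \<in> J \<and> 0 \<le> \<theta>1 \<and> 0 \<le> \<theta>2
    \<and> 0 \<le> \<theta>1 * dev j + \<theta>2 * dev k \<and> 0 < \<theta>1 * opt j + \<theta>2 * opt k)"
  define W where "W = (\<lambda>j. (1, j, 0, j)) ` {j\<in>J. 0 \<le> dev j \<and> 0 < opt j}
    \<union> (\<lambda>(j, k). (- dev k, j, dev j, k)) ` {(j, k)\<in>J \<times> J. 0 < dev j \<and> dev k < 0}"
  have "0 < - dev k * opt j + dev j * opt k" if "j \<in> J" "k \<in> J" "0 < dev j" "dev k < 0" for j k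
    using dev_pos_opt_pos[OF that(1,3)] opt_nonneg[OF that(2)] that(3,4)
    by (metis add_pos_nonneg mult_nonneg_nonneg mult_pos_pos neg_0_less_iff_less less_imp_le)
  then have W_feasible: "feasible w" if "w \<in> W" for w
    using that by (auto simp: W_def feasible_def)
  have "finite W" unfolding W_def using assms(1)
    by (intro finite_UnI finite_imageI) (auto intro: finite_subset[of _ "J \<times> J"])
  then have fin: "finite (ratio ` W)" by simp
  have j0: "(1, j0, 0, j0) \<in> W" using assms(2-4) by (simp add: W_def)
  define V where "V = Max (ratio ` W)"
  have V_ge: "ratio w \<le> V" if "w \<in> W" for w unfolding V_def using fin that by simp
  have "V \<in> ratio ` W" unfolding V_def using fin j0 by (intro Max_in) auto
  then obtain w where "w \<in> W" "ratio w = V" by auto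
  then obtain \<theta>1 j \<theta>2 k where w: "feasible (\<theta>1, j, \<theta>2, k)" "ratio (\<theta>1, j, \<theta>2, k) = V"
    using W_feasible by (metis prod_cases4)
  show ?thesis
  proof (rule that[of V j k \<theta>1 \<theta>2]; (intro ballI impI)?)
    fix j assume "j \<in> J" "0 \<le> dev j" "0 < opt j"
    then have "ne j / opt j \<le> V" using V_ge[of "(1, j, 0, j)"] by (simp add: W_def ratio_def)
    then show "ne j \<le> V * opt j" using \<open>0 < opt j\<close> by (simp add: divide_le_eq)
  next
    fix j k assume jk: "j \<in> J" "k \<in> J" "0 < dev j" "dev k < 0"
    then have "ratio (- dev k, j, dev j, k) \<le> V" by (intro V_ge) (force simp: W_def)
    moreover have "0 < - dev k * opt j + dev j * opt k"
      using W_feasible[of "(- dev k, j, dev j, k)"] jk by (force simp: W_def feasible_def)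
    ultimately show "- dev k * ne j + dev j * ne k \<le> V * (- dev k * opt j + dev j * opt k)"
      by (simp add: ratio_def divide_le_eq)
  qed (use w in \<open>auto simp: feasible_def ratio_def\<close>)
qed

lemma primal_certificate:
  fixes ne opt dev :: "'a \<Rightarrow> real"
  assumes "finite J" "k0 \<in> J" "dev k0 < 0" "opt k0 = 0" "0 < ne k0"
    and opt_nonneg: "\<And>j. j \<in> J \<Longrightarrow> 0 \<le> opt j"
    and null: "\<And>j. j \<in> J \<Longrightarrow> opt j = 0 \<Longrightarrow> dev j = 0 \<Longrightarrow> ne j \<le> 0"
    and single: "\<And>j. j \<in> J \<Longrightarrow> 0 \<le> dev j \<Longrightarrow> 0 < opt j \<Longrightarrow> ne j \<le> V * opt j"
    and pair: "\<And>j k. j \<in> J \<Longrightarrow> k \<in> J \<Longrightarrow> 0 < dev j \<Longrightarrow> dev k < 0 \<Longrightarrow>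
       - dev k * ne j + dev j * ne k \<le> V * (- dev k * opt j + dev j * opt k)"
  obtains \<nu> where "0 < \<nu>" "\<forall>j\<in>J. ne j + \<nu> * dev j \<le> V * opt j"
proof -
  \<comment> \<open>The columns with negative deviation force \<nu> to be at least their slope; the pair bounds
    show that the largest slope also serves the columns with positive deviation.\<close>
  define slope where "slope k = (ne k - V * opt k) / (- dev k)" for k
  define \<nu> where "\<nu> = Max (slope ` {k\<in>J. dev k < 0})"
  have fin: "finite (slope ` {k\<in>J. dev k < 0})" using assms(1) by simp
  have slope_le: "slope k \<le> \<nu>" if "k \<in> J" "dev k < 0" for k
    unfolding \<nu>_def using fin that by simp
  have "\<nu> \<in> slope ` {k\<in>J. dev k < 0}" unfolding \<nu>_def using fin assms(2,3) by (intro Max_in) auto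
  then obtain kmax where kmax: "kmax \<in> J" "dev kmax < 0" "\<nu> = slope kmax" by auto
  have "0 < slope k0" using assms(3-5) by (simp add: slope_def divide_pos_neg)
  then have "0 < \<nu>" using slope_le[OF assms(2,3)] by linarith
  moreover have "ne j + \<nu> * dev j \<le> V * opt j" if j: "j \<in> J" for j
  proof -
    consider "dev j < 0" | "dev j = 0" | "0 < dev j" by linarith
    then show ?thesis
    proof cases
      case 1
      then have "0 < - dev j" by simp
      then have "ne j - V * opt j \<le> \<nu> * - dev j"
        using slope_le[OF j 1] unfolding slope_def by (simp only: pos_divide_le_eq)
      then show ?thesis by (simp add: algebra_simps)
    next
      case 2
      then show ?thesis using opt_nonneg[OF j] single[OF j] null[OF j] by force
    next
      case 3
      have "\<nu> * - dev kmax = ne kmax - V * opt kmax" using kmax by (simp add: slope_def)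
      then have "- dev kmax * (ne j + \<nu> * dev j) = - dev kmax * ne j + dev j * (ne kmax - V * opt kmax)"
        by (simp add: algebra_simps)
      also have "\<dots> \<le> - dev kmax * (V * opt j)"
        using pair[OF j kmax(1) 3 kmax(2)] by (simp add: algebra_simps)
      finally show ?thesis using kmax(2) by (simp add: mult_le_cancel_left)
    qed
  qed
  ultimately show ?thesis using that by blast
qed

section \<open>Matching the bounds\<close>

lemma col_opt_pos_of_col_dev_pos:
  assumes cost_pos: "\<forall>t\<in>T. \<forall>k\<in>{1..n}. 0 < fst t k" and util_pos: "\<forall>t\<in>T. \<forall>k\<in>{1..n}. 0 < snd t k"
    and "j \<in> columns T n" "0 < col_dev j"
  shows "0 < col_opt j"
proof -
  obtain t A X B where j: "j = (t, A, X, B)" "t \<in> T" "A + X + B \<le> n"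
    using assms(3) by (auto simp: columns_def)
  have "B \<noteq> 0"
  proof
    assume "B = 0"
    then have "0 < - real A * snd t (A + X)" using assms(4) j(1) by (simp add: col_dev_def)
    moreover have "0 < snd t (A + X)" if "A \<noteq> 0"
    proof -
      have "A + X \<in> {1..n}" using that j(3) by auto
      then show ?thesis using util_pos j(2) by blast
    qed
    ultimately show False by (cases "A = 0") (auto simp: mult_less_0_iff)
  qed
  then show ?thesis using type_cost_pos[OF cost_pos j(2), of "X + B"] j by (simp add: col_opt_def)
qed

lemma col_ne_nonpos_of_null:
  assumes cost_pos: "\<forall>t\<in>T. \<forall>k\<in>{1..n}. 0 < fst t k" and util_pos: "\<forall>t\<in>T. \<forall>k\<in>{1..n}. 0 < snd t k"
    and "j \<in> columns T n" "col_opt j = 0" "col_dev j = 0"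
  shows "col_ne j \<le> 0"
proof -
  obtain t A X B where j: "j = (t, A, X, B)" "t \<in> T" "A + X + B \<le> n"
    using assms(3) by (auto simp: columns_def)
  have "X + B = 0"
    using type_cost_pos[OF cost_pos j(2), of "X + B"] assms(4) j by (fastforce simp: col_opt_def)
  moreover have "A = 0"
  proof (rule ccontr)
    assume "A \<noteq> 0"
    moreover have "A \<in> {1..n}" using \<open>A \<noteq> 0\<close> j(3) by auto
    ultimately have "0 < real A * snd t A" using util_pos j(2) by simp
    then show False using assms(5) j(1) \<open>X + B = 0\<close> by (auto simp: col_dev_def)
  qed
  ultimately show ?thesis using j(1) by (simp add: col_ne_def type_cost_def)
qed

lemma GPoA_le_PoA_game_pos_util:
  assumes cost_pos: "\<forall>t\<in>T. \<forall>k\<in>{1..n}. 0 < fst t k" and util_pos: "\<forall>t\<in>T. \<forall>k\<in>{1..n}. 0 < snd t k"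
    and "finite T" "t0 \<in> T" "0 < n"
  obtains G where "in_class T n G" "card (res G) = 2 * n" "GPoA T n \<le> PoA n G"
proof -
  note fin = finite_columns[OF assms(3)]
  have j0: "(t0, 0, 1, 0) \<in> columns T n" and k0: "(t0, 1, 0, 0) \<in> columns T n"
    using assms(4,5) by (auto simp: columns_def)
  have c1: "0 < type_cost t0 1" using type_cost_pos[OF cost_pos assms(4)] assms(5) by simp
  have f1: "0 < snd t0 1" using util_pos assms(4,5) by simp
  have j0_vals: "0 \<le> col_dev (t0, 0, 1, 0)" "0 < col_opt (t0, 0, 1, 0)"
    "col_dev (t0, 0, 1, 0) = 0" "col_ne (t0, 0, 1, 0) = col_opt (t0, 0, 1, 0)"
    using c1 by (simp_all add: col_dev_def col_opt_def col_ne_def)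
  have k0_vals: "col_dev (t0, 1, 0, 0) < 0" "col_opt (t0, 1, 0, 0) = 0" "0 < col_ne (t0, 1, 0, 0)"
    using c1 f1 by (simp_all add: col_dev_def col_opt_def col_ne_def type_cost_def)
  obtain V j k \<theta>1 \<theta>2 where single: "\<forall>j\<in>columns T n. 0 \<le> col_dev j \<longrightarrow> 0 < col_opt j \<longrightarrow> col_ne j \<le> V * col_opt j"
    and pair: "\<forall>j\<in>columns T n. \<forall>k\<in>columns T n. 0 < col_dev j \<longrightarrow> col_dev k < 0 \<longrightarrow>
       - col_dev k * col_ne j + col_dev j * col_ne k \<le> V * (- col_dev k * col_opt j + col_dev j * col_opt k)"
    and jk: "j \<in> columns T n" "k \<in> columns T n" "0 \<le> \<theta>1" "0 \<le> \<theta>2"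
      "0 \<le> \<theta>1 * col_dev j + \<theta>2 * col_dev k" "0 < \<theta>1 * col_opt j + \<theta>2 * col_opt k"
    and V: "V = (\<theta>1 * col_ne j + \<theta>2 * col_ne k) / (\<theta>1 * col_opt j + \<theta>2 * col_opt k)"
    by (rule dual_candidate_max[where dev = col_dev and opt = col_opt and ne = col_ne, OF fin j0 j0_vals(1,2) col_opt_nonneg[OF cost_pos]
          col_opt_pos_of_col_dev_pos[OF cost_pos util_pos]])
  obtain \<nu> where "0 < \<nu>" and primal: "\<forall>j\<in>columns T n. col_ne j + \<nu> * col_dev j \<le> V * col_opt j"
    by (rule primal_certificate[where dev = col_dev and opt = col_opt and ne = col_ne, OF fin k0 k0_vals col_opt_nonneg[OF cost_pos]
          col_ne_nonpos_of_null[OF cost_pos util_pos] single[rule_format] pair[rule_format]])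
  have "col_opt (t0, 0, 1, 0) \<le> V * col_opt (t0, 0, 1, 0)" using bspec[OF primal j0] j0_vals(3,4) by simp
  then have "0 < V" using j0_vals(2) by (simp add: mult_le_cancel_right1)
  then have GPoA: "GPoA T n \<le> ereal V" using GPoA_le_of_columns[OF \<open>0 < \<nu>\<close>] primal by blast
  obtain G where "in_class T n G" "card (res G) = 2 * n" "ereal V \<le> PoA n G"
    unfolding V by (rule PoA_ge_two_columns[OF cost_pos assms(5) jk])
  then show ?thesis using that GPoA by (meson order_trans)
qed

lemma PoA_infinite_game_nonpos_util:
  assumes cost_pos: "\<forall>t\<in>T. \<forall>k\<in>{1..n}. 0 < fst t k" and "t \<in> T" "k \<in> {1..n}" "snd t k \<le> 0"
  obtains G where "in_class T n G" "card (res G) = n" "PoA n G = \<infinity>"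
proof -
  have "(t, k, 0, 0) \<in> columns T n" using assms(3) by (simp add: columns_def \<open>t \<in> T\<close>)
  moreover have "0 \<le> col_dev (t, k, 0, 0)" using assms(4) by (simp add: col_dev_def mult_nonneg_nonpos)
  ultimately obtain G where G: "in_class T n G" "card (res G) = n"
    and "cost_ratio (1 * col_ne (t, k, 0, 0)) (1 * col_opt (t, k, 0, 0)) \<le> PoA n G"
    using PoA_ge_of_columns[OF cost_pos _, of 1 "\<lambda>_. (t, k, 0, 0)" "\<lambda>_. 1"] assms(3) by auto
  moreover have "0 < type_cost t k" using type_cost_pos[OF cost_pos \<open>t \<in> T\<close>] assms(3) by simp
  ultimately show ?thesis using that assms(3) by (simp add: cost_ratio_def col_ne_def col_opt_def type_cost_def)
qed

lemma GPoA_le_PoA_game: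
  assumes cost_pos: "\<forall>t\<in>T. \<forall>k\<in>{1..n}. 0 < fst t k" and "finite T" "T \<noteq> {}" "0 < n"
  obtains G where "in_class T n G" "card (res G) \<le> 2 * n" "GPoA T n \<le> PoA n G"
proof (cases "\<exists>t\<in>T. \<exists>k\<in>{1..n}. snd t k \<le> 0")
  case True
  then obtain t k where "t \<in> T" "k \<in> {1..n}" "snd t k \<le> 0" by blast
  then obtain G where "in_class T n G" "card (res G) = n" "PoA n G = \<infinity>"
    by (rule PoA_infinite_game_nonpos_util[OF cost_pos])
  then show ?thesis using that by simp
next
  case False
  then have util_pos: "\<forall>t\<in>T. \<forall>k\<in>{1..n}. 0 < snd t k" by (auto simp: not_le)
  obtain t0 where "t0 \<in> T" using assms(3) by blast
  then obtain G where "in_class T n G" "card (res G) = 2 * n" "GPoA T n \<le> PoA n G"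
    by (rule GPoA_le_PoA_game_pos_util[OF cost_pos util_pos assms(2) _ assms(4)])
  then show ?thesis using that by simp
qed

theorem theorem4:
  fixes T :: "rtype set" and n :: nat
  assumes "finite T" and "T \<noteq> {}" and "n > 0"
    and "\<forall>t\<in>T. \<forall>k\<in>{1..n}. fst t k > 0"
  shows "PoA_class T n = GPoA T n \<and>
         (\<exists>G. in_class T n G \<and> card (res G) \<le> 2 * n \<and> PoA n G = GPoA T n)"
proof -
  obtain G where G: "in_class T n G" "card (res G) \<le> 2 * n" and lower: "GPoA T n \<le> PoA n G"
    using GPoA_le_PoA_game[OF assms(4,1,2,3)] .
  have "PoA n G \<le> PoA_class T n" unfolding PoA_class_def using G(1) by (intro SUP_upper) simp
  moreover have "PoA_class T n \<le> GPoA T n" by (rule PoA_class_le_GPoA[OF assms(4,2,3)])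
  ultimately have "PoA_class T n = GPoA T n" "PoA n G = GPoA T n" using lower by auto
  then show ?thesis using G by blast
qed

end
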